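(* Let $(\mathcal{A}, \mathcal{B})$ be a stable cross-intersecting pair of families in $\mathcal{I}_{n, k}^r$. For any $A \in \mathcal{A}$ and $B \in \mathcal{B}$, there is some $i \in [n]$ with $(i, 1) \in A \cap B$.
   Context: $\Gamma_{n,k}$ is the disjoint union of $n$ copies of $K_k$, with vertices $(i,j)$, $i\in[n]$, $j\in[k]$; $\mathcal{I}_{n,k}^r$ is the set of its independent sets of size $r$. For $i\in[n]$, $s\in[2,k]$ and $X\in\mathcal{I}_{n,k}^r$, $P_{i,s}(X)=(X\setminus\{(i,s)\})\cup\{(i,1)\}$ if $(i,s)\in X$ and $P_{i,s}(X)=X$ otherwise; $\pi_{i,s}(\mathcal{F})=\{P_{i,s}(X): X\in\mathcal{F}\}\cup\{X\in\mathcal{F}: P_{i,s}(X)\in\mathcal{F}\}$. A family $\mathcal{F}$ is stable if $\pi_{i,s}(\mathcal{F})=\mathcal{F}$ for all $i\in[n]$, $s\in[2,k]$; a pair is stable if both families are. A pair $(\mathcal{A},\mathcal{B})$ of non-empty families is cross-intersecting if $A\cap B\neq\emptyset$ for all $A\in\mathcal{A},B\in\mathcal{B}$. *)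

theory Defs
  imports Main
begin

text \<open>Vertices of Gamma_{n,k}: pairs (i,j) with i in [n] = {1..n}, j in [k] = {1..k}.
  Two distinct vertices are adjacent iff they lie in the same copy of K_k (same i).\<close>

definition gamma_vertices :: "nat \<Rightarrow> nat \<Rightarrow> (nat \<times> nat) set" where
  "gamma_vertices n k = {1..n} \<times> {1..k}"

definition independent_sets :: "nat \<Rightarrow> nat \<Rightarrow> nat \<Rightarrow> (nat \<times> nat) set set" where
  "independent_sets n k r =
     {X. X \<subseteq> gamma_vertices n k \<and> card X = r \<and>
         (\<forall>x\<in>X. \<forall>y\<in>X. fst x = fst y \<longrightarrow> x = y)}"

definition P_shift :: "nat \<Rightarrow> nat \<Rightarrow> (nat \<times> nat) set \<Rightarrow> (nat \<times> nat) set" where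
  "P_shift i s X = (if (i, s) \<in> X then (X - {(i, s)}) \<union> {(i, 1)} else X)"

definition pi_shift :: "nat \<Rightarrow> nat \<Rightarrow> (nat \<times> nat) set set \<Rightarrow> (nat \<times> nat) set set" where
  "pi_shift i s F = {P_shift i s X | X. X \<in> F} \<union> {X \<in> F. P_shift i s X \<in> F}"

definition stable :: "nat \<Rightarrow> nat \<Rightarrow> (nat \<times> nat) set set \<Rightarrow> bool" where
  "stable n k F \<longleftrightarrow> (\<forall>i\<in>{1..n}. \<forall>s\<in>{2..k}. pi_shift i s F = F)"

definition cross_intersecting :: "'a set set \<Rightarrow> 'a set set \<Rightarrow> bool" where
  "cross_intersecting A B \<longleftrightarrow> A \<noteq> {} \<and> B \<noteq> {} \<and> (\<forall>a\<in>A. \<forall>b\<in>B. a \<inter> b \<noteq> {})"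

end

theory Submission
  imports Defs
begin

text \<open>Suppose A \<inter> B contains no vertex of the form (i,1), and pick (i,j) \<in> A \<inter> B, so j \<ge> 2.
  Since A is independent, (i,1) \<notin> A, hence shifting (i,j) to (i,1) in B gives a member
  B' = P_shift i j B of the stable family with A \<inter> B' = (A \<inter> B) - {(i,j)}, which again contains no
  vertex (i',1). Descending on |A \<inter> B| eventually produces a member of the family disjoint
  from A, contradicting cross-intersection.\<close>

lemma P_shift_mem_if_pi_shift_eq:
  assumes "pi_shift i s F = F" and "X \<in> F"
  shows "P_shift i s X \<in> F"
  using assms unfolding pi_shift_def by blast

lemma P_shift_mem_if_stable:
  assumes "stable n k F" and "X \<in> F" and "i \<in> {1..n}" and "s \<in> {2..k}"
  shows "P_shift i s X \<in> F"
  using assms by (intro P_shift_mem_if_pi_shift_eq) (auto simp: stable_def)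

lemma inter_P_shift:
  assumes "(i, 1) \<notin> A"
  shows "A \<inter> P_shift i s B = A \<inter> B - {(i, s)}"
  using assms unfolding P_shift_def by auto

lemma independent_sets_same_copy:
  assumes "X \<in> independent_sets n k r" and "x \<in> X" and "y \<in> X" and "fst x = fst y"
  shows "x = y"
  using assms unfolding independent_sets_def by blast

lemma independent_sets_subset_vertices:
  assumes "X \<in> independent_sets n k r"
  shows "X \<subseteq> {1..n} \<times> {1..k}"
  using assms unfolding independent_sets_def gamma_vertices_def by blast

lemma finite_independent_sets:
  assumes "X \<in> independent_sets n k r"
  shows "finite X"
  using independent_sets_subset_vertices[OF assms] by (rule finite_subset) simp

lemma stable_meets_first_layer:
  assumes A: "A \<in> independent_sets n k r"
    and \<B>: "\<B> \<subseteq> independent_sets n k r'" "stable n k \<B>"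
    and meets: "\<And>B. B \<in> \<B> \<Longrightarrow> A \<inter> B \<noteq> {}"
    and "B \<in> \<B>"
  shows "\<exists>i. (i, 1) \<in> A \<inter> B"
  using \<open>B \<in> \<B>\<close>
proof (induction "card (A \<inter> B)" arbitrary: B rule: less_induct)
  case less
  show ?case
  proof (rule ccontr)
    assume no_first: "\<nexists>i. (i, 1) \<in> A \<inter> B"
    obtain i j where ij: "(i, j) \<in> A \<inter> B"
      using meets[OF less.prems] by auto
    have "j \<noteq> 1"
      using ij no_first by auto
    moreover have "(i, j) \<in> {1..n} \<times> {1..k}"
      using ij less.prems \<B>(1) independent_sets_subset_vertices by blast
    ultimately have range: "i \<in> {1..n}" "j \<in> {2..k}"
      by auto
    have "(i, 1) \<notin> A"
      using ij \<open>j \<noteq> 1\<close> independent_sets_same_copy[OF A] by fastforce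
    then have shifted: "A \<inter> P_shift i j B = A \<inter> B - {(i, j)}"
      by (rule inter_P_shift)
    have "card (A \<inter> P_shift i j B) < card (A \<inter> B)"
      unfolding shifted using ij finite_independent_sets[OF A]
      by (intro card_Diff1_less) auto
    moreover have "P_shift i j B \<in> \<B>"
      using P_shift_mem_if_stable[OF \<B>(2) less.prems range] .
    ultimately obtain i' where "(i', 1) \<in> A \<inter> P_shift i j B"
      using less.hyps by blast
    then show False
      using shifted no_first by auto
  qed
qed

theorem lemma4p2:
  fixes n k r :: nat and \<A> \<B> :: "(nat \<times> nat) set set"
  assumes "\<A> \<subseteq> independent_sets n k r" and "\<B> \<subseteq> independent_sets n k r"
    and "stable n k \<A>" and "stable n k \<B>"
    and "cross_intersecting \<A> \<B>"
    and "A \<in> \<A>" and "B \<in> \<B>"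
  shows "\<exists>i\<in>{1..n}. (i, 1) \<in> A \<inter> B"
proof -
  have A: "A \<in> independent_sets n k r"
    using assms(1,6) by blast
  have "\<And>B'. B' \<in> \<B> \<Longrightarrow> A \<inter> B' \<noteq> {}"
    using assms(5,6) unfolding cross_intersecting_def by blast
  then obtain i where "(i, 1) \<in> A \<inter> B"
    using stable_meets_first_layer[OF A assms(2,4) _ assms(7)] by blast
  moreover have "i \<in> {1..n}"
    using calculation independent_sets_subset_vertices[OF A] by blast
  ultimately show ?thesis
    by blast
qed

end
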